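(* Consider any run of shadow moat growing on $(G,t)$ with final growth values $(y_S)$, and any tree $T$ in $G$ with leaf set $S'\subseteq V$. Then $$\mathrm{UM}(T)\ \ge\ c(T)-\sum_{S\subseteq V:\ S\odot S'} y_S .$$
   Context: $G=(V,E,c)$ is an undirected graph with edge costs $c\ge0$; $\delta(S)$ is the set of edges with exactly one endpoint in $S$; $c(T)=\sum_{e\in T}c_e$. Shadow moat growing on $(G,t)$, $t:V\to\mathbb{R}_{\ge0}$: continuous process in time maintaining a forest (initially empty), its components, and $y_S\ge0$ (initially $0$); at time $\tau$ a component $C$ is active iff some $w\in C$ has $t_w>\tau$, and each active $C$ increases $y_C$ at rate $1$; an edge $e$ between different components with $\sum_{S:e\in\delta(S)}y_S=c_e$ is added and the components merge; stop when nothing is active. In every run $\sum_{S:e\in\delta(S)}y_S\le c_e$ for all edges. For $S,A\subseteq V$, $S\odot A$ means $S\cap A\neq\emptyset$ and $A\not\subseteq S$. For a forest $F$: $\mathrm{UC}(F)=\sum_{e\in F}\big(c_e-\sum_{S:e\in\delta(S)}y_S\big)$; $\mathrm{MC}(F)=\sum_{S:\,|\delta(S)\cap F|\ge2}|\delta(S)\cap F|\,y_S$; $\mathrm{UM}(F)=\mathrm{UC}(F)+\mathrm{MC}(F)$. *)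

theory Defs
  imports Complex_Main
begin

definition graph :: "'a set \<Rightarrow> 'a set set \<Rightarrow> ('a set \<Rightarrow> real) \<Rightarrow> bool" where
  "graph V E c \<longleftrightarrow> finite V \<and> (\<forall>e\<in>E. \<exists>u v. e = {u, v} \<and> u \<noteq> v \<and> u \<in> V \<and> v \<in> V)
     \<and> (\<forall>e\<in>E. c e \<ge> 0)"

definition delta :: "'a set set \<Rightarrow> 'a set \<Rightarrow> 'a set set" where
  "delta E S = {e \<in> E. card (e \<inter> S) = 1}"

definition cost :: "('a set \<Rightarrow> real) \<Rightarrow> 'a set set \<Rightarrow> real" where
  "cost c T = (\<Sum>e\<in>T. c e)"

definition load :: "'a set \<Rightarrow> 'a set set \<Rightarrow> ('a set \<Rightarrow> real) \<Rightarrow> 'a set \<Rightarrow> real" where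
  "load V E y e = (\<Sum>S\<in>{S. S \<subseteq> V \<and> e \<in> delta E S}. y S)"

definition adj :: "'a set set \<Rightarrow> ('a \<times> 'a) set" where
  "adj F = {(u, w). {u, w} \<in> F}"

definition comp :: "'a set \<Rightarrow> 'a set set \<Rightarrow> 'a \<Rightarrow> 'a set" where
  "comp V F v = {w \<in> V. (v, w) \<in> (adj F)\<^sup>*}"

definition comps :: "'a set \<Rightarrow> 'a set set \<Rightarrow> 'a set set" where
  "comps V F = comp V F ` V"

definition crossing :: "'a set \<Rightarrow> 'a set set \<Rightarrow> 'a set \<Rightarrow> bool" where
  "crossing V F e \<longleftrightarrow> (\<exists>u v. e = {u, v} \<and> comp V F u \<noteq> comp V F v)"

definition active :: "('a \<Rightarrow> real) \<Rightarrow> real \<Rightarrow> 'a set \<Rightarrow> bool" where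
  "active t \<tau> C \<longleftrightarrow> (\<exists>w\<in>C. t w > \<tau>)"

text \<open>Reachable states (F, y, tau) of shadow moat growing on (G, t), described as a
  finite sequence of events: adding a tight edge between different components, or
  growing all active components by some delta > 0 during an interval in which the set of
  active components does not change and no edge between different components is tight
  at its start (tight edges are added immediately).\<close>
inductive moat_state :: "'a set \<Rightarrow> 'a set set \<Rightarrow> ('a set \<Rightarrow> real) \<Rightarrow> ('a \<Rightarrow> real)
    \<Rightarrow> 'a set set \<Rightarrow> ('a set \<Rightarrow> real) \<Rightarrow> real \<Rightarrow> bool"
  for V E c t where
  init: "moat_state V E c t {} (\<lambda>S. 0) 0"
| add: "\<lbrakk> moat_state V E c t F y \<tau>; e \<in> E; crossing V F e; load V E y e = c e \<rbrakk>
        \<Longrightarrow> moat_state V E c t (insert e F) y \<tau>"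
| grow: "\<lbrakk> moat_state V E c t F y \<tau>; d > 0;
           \<forall>e\<in>E. crossing V F e \<longrightarrow> load V E y e < c e;
           \<forall>C\<in>comps V F. active t \<tau> C \<longrightarrow> (\<exists>w\<in>C. t w \<ge> \<tau> + d);
           y' = (\<lambda>S. if S \<in> comps V F \<and> active t \<tau> S then y S + d else y S);
           \<forall>e\<in>E. crossing V F e \<longrightarrow> load V E y' e \<le> c e \<rbrakk>
        \<Longrightarrow> moat_state V E c t F y' (\<tau> + d)"

definition moat_final :: "'a set \<Rightarrow> 'a set set \<Rightarrow> ('a set \<Rightarrow> real) \<Rightarrow> ('a \<Rightarrow> real)
    \<Rightarrow> 'a set set \<Rightarrow> ('a set \<Rightarrow> real) \<Rightarrow> real \<Rightarrow> bool" where
  "moat_final V E c t F y \<tau> \<longleftrightarrow> moat_state V E c t F y \<tau> \<and> (\<forall>C\<in>comps V F. \<not> active t \<tau> C)"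

definition has_cycle :: "'a set set \<Rightarrow> bool" where
  "has_cycle F \<longleftrightarrow> (\<exists>vs. length vs \<ge> 3 \<and> distinct vs \<and>
      (\<forall>i < length vs. {vs ! i, vs ! ((i + 1) mod length vs)} \<in> F))"

definition is_tree_in :: "'a set set \<Rightarrow> 'a set set \<Rightarrow> bool" where
  "is_tree_in E T \<longleftrightarrow> T \<subseteq> E \<and> \<not> has_cycle T \<and>
      (\<forall>u\<in>\<Union>T. \<forall>v\<in>\<Union>T. (u, v) \<in> (adj T)\<^sup>*)"

definition leaves :: "'a set set \<Rightarrow> 'a set" where
  "leaves T = {v \<in> \<Union>T. card {e \<in> T. v \<in> e} = 1}"

definition odot :: "'a set \<Rightarrow> 'a set \<Rightarrow> bool" where
  "odot S A \<longleftrightarrow> S \<inter> A \<noteq> {} \<and> \<not> A \<subseteq> S"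

definition UC :: "'a set \<Rightarrow> 'a set set \<Rightarrow> ('a set \<Rightarrow> real) \<Rightarrow> ('a set \<Rightarrow> real) \<Rightarrow> 'a set set \<Rightarrow> real" where
  "UC V E c y F = (\<Sum>e\<in>F. c e - load V E y e)"

definition MC :: "'a set \<Rightarrow> 'a set set \<Rightarrow> ('a set \<Rightarrow> real) \<Rightarrow> 'a set set \<Rightarrow> real" where
  "MC V E y F = (\<Sum>S\<in>{S. S \<subseteq> V \<and> card (delta E S \<inter> F) \<ge> 2}. real (card (delta E S \<inter> F)) * y S)"

definition UM :: "'a set \<Rightarrow> 'a set set \<Rightarrow> ('a set \<Rightarrow> real) \<Rightarrow> ('a set \<Rightarrow> real) \<Rightarrow> 'a set set \<Rightarrow> real" where
  "UM V E c y F = UC V E c y F + MC V E y F"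

end

theory Submission
  imports Defs
begin

(*
  Only the nonnegativity of the moat values y_S is used from the run. Writing k_S for the
  number of tree edges crossing S, double counting gives sum over e in T of the loads equal to
  sum over S of k_S y_S. The terms with k_S >= 2 are paid for by MC(T). If k_S = 1, removing
  the unique crossing edge e splits the tree in two, and walking away from e inside either
  side of the cut without reusing an edge must end at a leaf, since the tree is finite and
  acyclic; so S contains a leaf and misses a leaf, i.e. S is one of the sets on the right.
*)

definition path_in :: "'a set set \<Rightarrow> 'a list \<Rightarrow> bool" where
  "path_in T vs \<longleftrightarrow> distinct vs \<and> (\<forall>i. Suc i < length vs \<longrightarrow> {vs ! i, vs ! Suc i} \<in> T)"

lemma path_in_singleton [simp]: "path_in T [x]"
  by (simp add: path_in_def)

lemma path_in_Cons_Cons: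
  "path_in T (z # x # xs) \<longleftrightarrow> z \<notin> set (x # xs) \<and> {z, x} \<in> T \<and> path_in T (x # xs)"
  unfolding path_in_def by (auto simp: nth_Cons split: nat.split)

lemma has_cycle_if_path_closes:
  assumes path: "path_in T vs" and j: "2 \<le> j" "j < length vs" and closing: "{vs ! j, vs ! 0} \<in> T"
  shows "has_cycle T"
  unfolding has_cycle_def
proof (intro exI conjI allI impI)
  let ?cs = "take (Suc j) vs"
  show "3 \<le> length ?cs" "distinct ?cs"
    using path j by (auto simp: path_in_def)
  fix i assume "i < length ?cs"
  then consider "i < j" | "i = j" using j by fastforce
  then show "{?cs ! i, ?cs ! ((i + 1) mod length ?cs)} \<in> T"
    by cases (use path j closing in \<open>auto simp: path_in_def\<close>)
qed

lemma two_set_other_end: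
  assumes "card f = 2" "x \<in> f"
  obtains z where "f = {x, z}" "z \<noteq> x"
  using assms by (auto simp: card_2_iff)

lemma card_inter_Compl_eq_1_iff:
  assumes "card f = 2"
  shows "card (f \<inter> - S) = 1 \<longleftrightarrow> card (f \<inter> S) = 1"
proof -
  have "finite f" using assms by (simp add: card_ge_0_finite)
  then have "card (f \<inter> - S) = 2 - card (f \<inter> S)"
    using assms by (simp add: Diff_eq[symmetric] card_Diff_subset_Int)
  then show ?thesis by linarith
qed

lemma moat_state_y_nonneg: "moat_state V E c t F y \<tau> \<Longrightarrow> y S \<ge> 0"
  by (induction rule: moat_state.induct) auto

lemma non_leaf_has_other_edge:
  assumes "v \<in> \<Union>T" "v \<notin> leaves T"
  shows "\<exists>f\<in>T. v \<in> f \<and> f \<noteq> g"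
proof (rule ccontr)
  assume "\<not> ?thesis"
  then have "{f \<in> T. v \<in> f} \<subseteq> {g}" by blast
  moreover have "{f \<in> T. v \<in> f} \<noteq> {}" using assms(1) by blast
  ultimately have "{f \<in> T. v \<in> f} = {g}" by (metis subset_singleton_iff)
  then show False using assms by (simp add: leaves_def)
qed

lemma edge_subset_if_not_crossing:
  assumes "card f = 2" "x \<in> f" "x \<in> X" "card (f \<inter> X) \<noteq> 1"
  shows "f \<subseteq> X"
proof -
  obtain z where z: "f = {x, z}" "z \<noteq> x" using assms(1,2) by (rule two_set_other_end)
  then have "z \<in> X" using assms(3,4) by (cases "z \<in> X") auto
  then show ?thesis using z assms(3) by blast
qed

lemma path_in_length_le:
  assumes "finite T" "\<And>f. f \<in> T \<Longrightarrow> card f = 2" "path_in T vs" "set vs \<subseteq> \<Union>T"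
  shows "length vs \<le> card (\<Union>T)"
proof -
  have "finite (\<Union>T)" using assms(1,2) by (metis card.infinite finite_Union zero_neq_numeral)
  then have "card (set vs) \<le> card (\<Union>T)" using assms(4) by (rule card_mono)
  then show ?thesis using assms(3) by (simp add: path_in_def distinct_card)
qed

lemma leaf_in_cut:
  assumes fin: "finite T" and edges: "\<And>f. f \<in> T \<Longrightarrow> card f = 2" and acyc: "\<not> has_cycle T"
    and eT: "e \<in> T" and e_cut: "card (e \<inter> X) = 1"
    and e_unique: "\<And>f. f \<in> T \<Longrightarrow> card (f \<inter> X) = 1 \<Longrightarrow> f = e"
  shows "X \<inter> leaves T \<noteq> {}"
proof
  assume no_leaf: "X \<inter> leaves T = {}"
  obtain u where u: "e \<inter> X = {u}" using e_cut by (rule card_1_singletonE)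
  \<comment> \<open>Paths inside X ending at the X-endpoint u of e: without a leaf in X each of them
    extends by a vertex, so they grow longer than the finite tree allows.\<close>
  define good where "good vs \<longleftrightarrow> path_in T vs \<and> set vs \<subseteq> X \<inter> \<Union>T \<and> last vs = u" for vs
  have extend: "\<exists>z. good (z # x # xs)" if good: "good (x # xs)" for x xs
  proof -
    have x: "x \<in> X" "x \<in> \<Union>T" "x \<notin> leaves T" using good no_leaf by (auto simp: good_def)
    obtain f where f: "f \<in> T" "x \<in> f" "f \<noteq> e" "xs \<noteq> [] \<longrightarrow> f \<noteq> {x, hd xs}"
    proof (cases xs)
      case Nil
      then show ?thesis using that non_leaf_has_other_edge[OF x(2,3), of e] by auto
    next
      case (Cons w ws)
      then have "u \<in> set xs" using good by (auto simp: good_def split: if_splits)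
      moreover have "x \<notin> set xs" using good by (simp add: good_def path_in_def)
      ultimately have "x \<noteq> u" by blast
      then have "x \<notin> e" using u x(1) by blast
      then show ?thesis using that non_leaf_has_other_edge[OF x(2,3), of "{x, w}"] Cons by auto
    qed
    obtain z where z: "f = {x, z}" "z \<noteq> x" using edges[OF f(1)] f(2) by (rule two_set_other_end)
    have "z \<notin> set (x # xs)"
    proof
      assume "z \<in> set (x # xs)"
      then obtain j where j: "j < length (x # xs)" "(x # xs) ! j = z" by (meson in_set_conv_nth)
      have "j \<noteq> 0" using j(2) z(2) by (metis nth_Cons_0)
      moreover have "j \<noteq> 1" using j z f(4) by (cases xs) auto
      ultimately have "has_cycle T"
        using j z f(1) good
        by (intro has_cycle_if_path_closes[of T "x # xs" j]) (auto simp: good_def insert_commute)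
      then show False using acyc by contradiction
    qed
    moreover have "f \<subseteq> X"
      using edge_subset_if_not_crossing[OF edges[OF f(1)] f(2) x(1)] e_unique f(1,3) by blast
    ultimately show ?thesis using good z f(1)
      by (intro exI[of _ z]) (auto simp: good_def path_in_Cons_Cons insert_commute)
  qed
  have long_paths: "\<exists>vs. good vs \<and> length vs = Suc n" for n
  proof (induction n)
    case 0
    have "u \<in> X \<inter> \<Union>T" using u eT by blast
    then show ?case by (intro exI[of _ "[u]"]) (simp add: good_def)
  next
    case (Suc n)
    then obtain x xs where "good (x # xs)" "length xs = n" by (metis length_Suc_conv)
    then show ?case using extend by fastforce
  qed
  obtain vs where vs: "good vs" "length vs = Suc (card (\<Union>T))" using long_paths by blast
  have "length vs \<le> card (\<Union>T)"
    using vs(1) by (intro path_in_length_le[OF fin edges]) (auto simp: good_def)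
  then show False using vs(2) by simp
qed

lemma odot_leaves_if_crossed_once:
  assumes fin: "finite T" and edges: "\<And>f. f \<in> T \<Longrightarrow> card f = 2" and acyc: "\<not> has_cycle T"
    and TE: "T \<subseteq> E" and once: "card (delta E S \<inter> T) = 1"
  shows "odot S (leaves T)"
proof -
  obtain e where e: "delta E S \<inter> T = {e}" using once by (rule card_1_singletonE)
  have crossing_S: "card (f \<inter> S) = 1 \<longleftrightarrow> f = e" if "f \<in> T" for f
    using that TE e by (auto simp: delta_def)
  have eT: "e \<in> T" using e by blast
  have "S \<inter> leaves T \<noteq> {}"
    using crossing_S eT by (intro leaf_in_cut[OF fin edges acyc eT]) auto
  moreover have "- S \<inter> leaves T \<noteq> {}"
    using crossing_S eT card_inter_Compl_eq_1_iff[OF edges]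
    by (intro leaf_in_cut[OF fin edges acyc eT]) auto
  ultimately show ?thesis unfolding odot_def by blast
qed

lemma sum_subsets_eq_sum_Pow_if:
  assumes "finite V"
  shows "(\<Sum>S\<in>{S. S \<subseteq> V \<and> P S}. f S) = (\<Sum>S\<in>Pow V. if P S then f S else 0)"
proof -
  have "{S. S \<subseteq> V \<and> P S} = {S \<in> Pow V. P S}" by blast
  then have "(\<Sum>S\<in>{S. S \<subseteq> V \<and> P S}. f S) = (\<Sum>S\<in>{S \<in> Pow V. P S}. f S)"
    by (simp only:)
  also have "\<dots> = (\<Sum>S\<in>Pow V. if P S then f S else 0)"
    by (rule sum.inter_filter) (use assms in simp)
  finally show ?thesis .
qed

lemma sum_load_eq_sum_crossings:
  assumes "finite V" "finite T"
  shows "(\<Sum>e\<in>T. load V E y e) = (\<Sum>S\<in>Pow V. real (card (delta E S \<inter> T)) * y S)"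
proof -
  have "(\<Sum>e\<in>T. load V E y e) = (\<Sum>e\<in>T. \<Sum>S\<in>Pow V. if e \<in> delta E S then y S else 0)"
    using assms(1) by (simp add: load_def sum_subsets_eq_sum_Pow_if)
  also have "\<dots> = (\<Sum>S\<in>Pow V. \<Sum>e\<in>T. if e \<in> delta E S then y S else 0)"
    by (rule sum.swap)
  also have "\<dots> = (\<Sum>S\<in>Pow V. real (card (delta E S \<inter> T)) * y S)"
    using assms(2) by (intro sum.cong refl) (simp add: sum.inter_restrict[symmetric] Int_commute)
  finally show ?thesis .
qed

lemma UM_ge_cost_minus_odot_leaves:
  assumes finV: "finite V" and fin: "finite T" and edges: "\<And>f. f \<in> T \<Longrightarrow> card f = 2"
    and acyc: "\<not> has_cycle T" and TE: "T \<subseteq> E" and y_nonneg: "\<And>S. y S \<ge> 0"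
  shows "UM V E c y T \<ge> cost c T - (\<Sum>S\<in>{S. S \<subseteq> V \<and> odot S (leaves T)}. y S)"
proof -
  define k where "k S = card (delta E S \<inter> T)" for S
  have charge: "real (k S) * y S
      \<le> (if 2 \<le> k S then real (k S) * y S else 0) + (if odot S (leaves T) then y S else 0)" for S
  proof -
    consider "k S = 0" | "k S = 1" | "2 \<le> k S" by linarith
    then show ?thesis
    proof cases
      case 2
      then have "odot S (leaves T)"
        using odot_leaves_if_crossed_once[OF fin edges acyc TE] by (simp add: k_def)
      then show ?thesis using 2 y_nonneg[of S] by simp
    qed (use y_nonneg[of S] in auto)
  qed
  have "(\<Sum>e\<in>T. load V E y e) \<le> MC V E y T + (\<Sum>S\<in>{S. S \<subseteq> V \<and> odot S (leaves T)}. y S)"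
    unfolding sum_load_eq_sum_crossings[OF finV fin] MC_def sum_subsets_eq_sum_Pow_if[OF finV]
      sum.distrib[symmetric] k_def[symmetric]
    by (rule sum_mono) (rule charge)
  then show ?thesis by (simp add: UM_def UC_def cost_def sum_subtractf)
qed

lemma graph_edge_card:
  assumes "graph V E c" "e \<in> E"
  shows "card e = 2"
proof -
  obtain u v where "e = {u, v}" "u \<noteq> v" using assms by (auto simp: graph_def)
  then show ?thesis by simp
qed

lemma graph_finite_edges:
  assumes "graph V E c"
  shows "finite E"
proof -
  have "E \<subseteq> Pow V" using assms by (auto simp: graph_def)
  then show ?thesis using assms by (auto simp: graph_def intro: finite_subset)
qed

theorem mainTheorem11:
  fixes V :: "'a set" and E :: "'a set set" and c :: "'a set \<Rightarrow> real"
    and t :: "'a \<Rightarrow> real" and F :: "'a set set" and y :: "'a set \<Rightarrow> real" and \<tau> :: real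
    and T :: "'a set set"
  assumes "graph V E c"
    and "\<forall>v\<in>V. t v \<ge> 0"
    and "moat_final V E c t F y \<tau>"
    and "is_tree_in E T"
  shows "UM V E c y T \<ge> cost c T - (\<Sum>S\<in>{S. S \<subseteq> V \<and> odot S (leaves T)}. y S)"
proof (rule UM_ge_cost_minus_odot_leaves)
  show "finite V" using assms(1) by (simp add: graph_def)
  show TE: "T \<subseteq> E" and "\<not> has_cycle T" using assms(4) by (simp_all add: is_tree_in_def)
  show "finite T" using graph_finite_edges[OF assms(1)] TE by (rule finite_subset[rotated])
  show "card f = 2" if "f \<in> T" for f using graph_edge_card[OF assms(1)] that TE by blast
  show "y S \<ge> 0" for S
    using assms(3) by (auto simp: moat_final_def intro: moat_state_y_nonneg)
qed

end
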